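(* Let $H\in(1/2,1)$, $c\in(0,2^{2H-2})$ and $\lambda\in(0,c)$. For every $n\in\mathbb{N}$ and every pair of disjoint sets $A,B\subseteq\{1,2,\dots,n\}$, \[ p_n\,c^{|A|-1}\,D^\circ_H(A,B)>0 . \]
   Context: For $n\in\mathbb{N}$ put $p_n=\lambda n^{2H-2}$. For a finite set $A=\{i_0<i_1<\dots<i_k\}\subset\mathbb{N}\cup\{0\}$ define $L^\circ_H(A)=\prod_{j=1}^{k}|i_j-i_{j-1}|^{2H-2}$; if $|A|=1$ set $L^\circ_H(A)=1$, and set $L^\circ_H(\emptyset)=c/p_n$. For disjoint finite sets $A,B\subset\mathbb{N}\cup\{0\}$ define $D^\circ_H(A,B)=\sum_{B'\subseteq B}(-1)^{|B'|}c^{|B'|}L^\circ_H(A\cup B')$ (in particular $D^\circ_H(A,\emptyset)=L^\circ_H(A)$). *)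

theory Defs
  imports Complex_Main
begin

definition pn :: "real \<Rightarrow> real \<Rightarrow> nat \<Rightarrow> real" where
  "pn H lam n = lam * (real n) powr (2*H - 2)"

definition Lc :: "real \<Rightarrow> real \<Rightarrow> real \<Rightarrow> nat \<Rightarrow> nat set \<Rightarrow> real" where
  "Lc H c lam n A =
     (if A = {} then c / pn H lam n
      else (let xs = sorted_list_of_set A in
            \<Prod>j\<in>{1..<length xs}. \<bar>real (xs ! j) - real (xs ! (j - 1))\<bar> powr (2*H - 2)))"

definition Dc :: "real \<Rightarrow> real \<Rightarrow> real \<Rightarrow> nat \<Rightarrow> nat set \<Rightarrow> nat set \<Rightarrow> real" where
  "Dc H c lam n A B = (\<Sum>B'\<in>Pow B. (-1) ^ card B' * c ^ card B' * Lc H c lam n (A \<union> B'))"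

end

theory Submission
  imports Defs
begin

text \<open>Put \<open>u 0 = 1\<close> and \<open>u k = c k^(2H-2)\<close> for \<open>k \<ge> 1\<close>. Then \<open>c^(|X|-1) L\<^sup>\<circ>(X)\<close> is the
  product of \<open>u\<close> over the gaps between consecutive points of \<open>X\<close>, and \<open>c^(|A|-1) D\<^sup>\<circ>(A,B)\<close>
  is the alternating sum of these gap products over \<open>A \<union> B'\<close>, \<open>B' \<subseteq> B\<close>. Such sums factor at
  every point of \<open>A\<close>, and moving a point from \<open>B\<close> into \<open>A\<close> accounts exactly for the
  change caused by deleting it from \<open>B\<close>. Positivity therefore reduces to the atomic cases
  \<open>A = {x, y}\<close> with \<open>B \<subseteq> (x, y)\<close> and \<open>A = {x}\<close> with \<open>B\<close> on one side of \<open>x\<close>, where the sums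
  are smallest for full intervals; there they equal the first-renewal weights \<open>f\<close> of the
  renewal sequence \<open>u\<close>, resp. \<open>1 - \<Sum> f\<close>. The bound \<open>c < 2^(2H-2)\<close> makes \<open>u\<close> log-convex, and
  Kaluza's argument gives \<open>f > 0\<close> and \<open>\<Sum> f < 1\<close>. For \<open>A = {}\<close> one decomposes by the least point
  of \<open>B'\<close> and compares with \<open>A = {0}\<close>, using \<open>p\<^sub>n < u k\<close> for \<open>k \<le> n\<close>.\<close>

definition gap_prod :: "(nat \<Rightarrow> real) \<Rightarrow> nat set \<Rightarrow> real" where
  "gap_prod u X = (let xs = sorted_list_of_set X in \<Prod>i<length xs - 1. u (xs ! Suc i - xs ! i))"

lemma gap_prod_empty [simp]: "gap_prod u {} = 1"
  by (simp add: gap_prod_def)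

lemma gap_prod_singleton [simp]: "gap_prod u {a} = 1"
  by (simp add: gap_prod_def)

lemma gap_prod_insert_min:
  assumes "finite X" "X \<noteq> {}" "x < Min X"
  shows "gap_prod u (insert x X) = u (Min X - x) * gap_prod u X"
proof -
  define ys where "ys = sorted_list_of_set X"
  have "x \<notin> X" using assms Min_le by fastforce
  then have xs: "sorted_list_of_set (insert x X) = x # ys"
    using assms sorted_list_of_set_nonempty[of "insert x X"] by (simp add: ys_def Min_insert)
  obtain zs where ys: "ys = Min X # zs"
    using sorted_list_of_set_nonempty[OF assms(1,2)] ys_def by blast
  show ?thesis
    by (simp add: gap_prod_def xs ys_def[symmetric] ys prod.lessThan_Suc_shift del: prod.lessThan_Suc)
qed

lemma gap_prod_pair: "x < y \<Longrightarrow> gap_prod u {x, y} = u (y - x)"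
  using gap_prod_insert_min[of "{y}" x u] by simp

lemma gap_prod_cong:
  assumes "\<And>k. 0 < k \<Longrightarrow> u k = v k"
  shows "gap_prod u X = gap_prod v X"
proof -
  define xs where "xs = sorted_list_of_set X"
  have "xs ! i < xs ! Suc i" if "i < length xs - 1" for i
    using sorted_wrt_nth_less[OF strict_sorted_list_of_set[of X]] that by (simp add: xs_def)
  then show ?thesis
    unfolding gap_prod_def xs_def[symmetric] Let_def by (intro prod.cong) (auto intro: assms)
qed

lemma gap_prod_scale: "gap_prod (\<lambda>k. c * u k) X = c ^ (card X - 1) * gap_prod u X"
  by (simp add: gap_prod_def Let_def prod.distrib length_sorted_list_of_set)

lemma gap_prod_split:
  assumes "finite X" "m \<in> X"
  shows "gap_prod u X = gap_prod u {x\<in>X. x \<le> m} * gap_prod u {x\<in>X. m \<le> x}"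
  using assms
proof (induction X rule: finite_linorder_min_induct)
  case empty
  then show ?case by simp
next
  case (insert b X)
  show ?case
  proof (cases "b = m")
    case True
    with insert.hyps have "{x\<in>insert b X. x \<le> m} = {m}" "{x\<in>insert b X. m \<le> x} = insert b X"
      by auto
    then show ?thesis by simp
  next
    case False
    with insert have mX: "m \<in> X" "b < m" by auto
    then have "X \<noteq> {}" "Min X \<le> m"
      using insert.hyps by (auto simp: Min_le)
    then have "b < Min X"
      using insert.hyps Min_in by blast
    define L where "L = {x\<in>X. x \<le> m}"
    have "Min X \<in> L"
      using \<open>Min X \<le> m\<close> \<open>X \<noteq> {}\<close> insert.hyps(1) by (simp add: L_def)
    moreover have "L \<subseteq> X" "finite L" using insert.hyps(1) by (auto simp: L_def)
    ultimately have L: "finite L" "L \<noteq> {}" "Min L = Min X"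
      using insert.hyps(1) by (auto intro!: antisym Min_le[of X] Min_in)
    have "{x\<in>insert b X. x \<le> m} = insert b L" "{x\<in>insert b X. m \<le> x} = {x\<in>X. m \<le> x}"
      using mX by (auto simp: L_def)
    then show ?thesis
      using insert L \<open>b < Min X\<close> \<open>X \<noteq> {}\<close> mX
      by (simp add: gap_prod_insert_min L_def)
  qed
qed

definition alt_gap_sum :: "(nat \<Rightarrow> real) \<Rightarrow> nat set \<Rightarrow> nat set \<Rightarrow> real" where
  "alt_gap_sum u A B = (\<Sum>B'\<in>Pow B. (-1) ^ card B' * gap_prod u (A \<union> B'))"

lemma alt_gap_sum_empty [simp]: "alt_gap_sum u A {} = gap_prod u A"
  by (simp add: alt_gap_sum_def)

lemma alt_gap_sum_insert:
  assumes "finite S" "s \<notin> S"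
  shows "alt_gap_sum u A (insert s S) = alt_gap_sum u A S - alt_gap_sum u (insert s A) S"
proof -
  have inj: "inj_on (insert s) (Pow S)"
    using assms(2) by (intro inj_onI) (metis PowD insert_ident subset_iff)
  have "alt_gap_sum u A (insert s S) = alt_gap_sum u A S
      + (\<Sum>B'\<in>Pow S. (-1) ^ card (insert s B') * gap_prod u (A \<union> insert s B'))"
    unfolding alt_gap_sum_def Pow_insert using assms
    by (subst sum.union_disjoint) (auto simp: sum.reindex[OF inj])
  also have "(\<Sum>B'\<in>Pow S. (-1) ^ card (insert s B') * gap_prod u (A \<union> insert s B'))
      = - alt_gap_sum u (insert s A) S"
    unfolding alt_gap_sum_def sum_negf[symmetric]
    using assms by (intro sum.cong) (auto simp: finite_subset card_insert_if subset_iff)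
  finally show ?thesis by simp
qed

lemma alt_gap_sum_split:
  assumes "finite A" "finite B" "m \<in> A" "A \<inter> B = {}"
  shows "alt_gap_sum u A B
    = alt_gap_sum u {a\<in>A. a \<le> m} {b\<in>B. b < m} * alt_gap_sum u {a\<in>A. m \<le> a} {b\<in>B. m < b}"
  using assms(2,1,3,4)
proof (induction B arbitrary: A rule: finite_induct)
  case empty
  then show ?case by (simp add: gap_prod_split)
next
  case (insert s B)
  then have "s \<noteq> m" by auto
  let ?E = "alt_gap_sum u"
  have IH: "?E A' B = ?E {a\<in>A'. a \<le> m} {b\<in>B. b < m} * ?E {a\<in>A'. m \<le> a} {b\<in>B. m < b}"
    if "A' = A \<or> A' = insert s A" for A'
    using insert that by (intro insert.IH) auto
  have del: "?E A (insert s B) = ?E A B - ?E (insert s A) B"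
    using insert.hyps by (rule alt_gap_sum_insert)
  have fin: "finite {b\<in>B. P b}" for P
    using insert.hyps by auto
  show ?case
  proof (cases "s < m")
    case True
    then have "{a\<in>insert s A. a \<le> m} = insert s {a\<in>A. a \<le> m}"
      "{a\<in>insert s A. m \<le> a} = {a\<in>A. m \<le> a}"
      "{b\<in>insert s B. b < m} = insert s {b\<in>B. b < m}"
      "{b\<in>insert s B. m < b} = {b\<in>B. m < b}" by auto
    then show ?thesis
      using del IH[of A] IH[of "insert s A"] insert.hyps
      by (simp add: alt_gap_sum_insert[OF fin] algebra_simps)
  next
    case False
    with \<open>s \<noteq> m\<close> have "{a\<in>insert s A. a \<le> m} = {a\<in>A. a \<le> m}"
      "{a\<in>insert s A. m \<le> a} = insert s {a\<in>A. m \<le> a}"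
      "{b\<in>insert s B. b < m} = {b\<in>B. b < m}"
      "{b\<in>insert s B. m < b} = insert s {b\<in>B. m < b}" by auto
    then show ?thesis
      using del IH[of A] IH[of "insert s A"] insert.hyps
      by (simp add: alt_gap_sum_insert[OF fin] algebra_simps)
  qed
qed

lemma alt_gap_sum_split_Max:
  assumes "finite A" "A \<noteq> {}" "finite B" "A \<inter> B = {}"
  shows "alt_gap_sum u A B = alt_gap_sum u A {b\<in>B. b < Max A} * alt_gap_sum u {Max A} {b\<in>B. Max A < b}"
proof -
  have e: "{a\<in>A. a \<le> Max A} = A" "{a\<in>A. Max A \<le> a} = {Max A}"
    using Max_ge[OF assms(1)] Max_in[OF assms(1,2)] by (auto intro: antisym)
  from alt_gap_sum_split[OF assms(1,3) Max_in[OF assms(1,2)] assms(4)] show ?thesis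
    unfolding e .
qed

lemma alt_gap_sum_split_Min:
  assumes "finite A" "A \<noteq> {}" "finite B" "A \<inter> B = {}"
  shows "alt_gap_sum u A B = alt_gap_sum u {Min A} {b\<in>B. b < Min A} * alt_gap_sum u A {b\<in>B. Min A < b}"
proof -
  have e: "{a\<in>A. a \<le> Min A} = {Min A}" "{a\<in>A. Min A \<le> a} = A"
    using Min_le[OF assms(1)] Min_in[OF assms(1,2)] by (auto intro: antisym)
  from alt_gap_sum_split[OF assms(1,3) Min_in[OF assms(1,2)] assms(4)] show ?thesis
    unfolding e .
qed

lemma alt_gap_sum_triple:
  assumes "x < b" "b < y" "S \<subseteq> {x<..<y}" "b \<notin> S"
  shows "alt_gap_sum u {x, b, y} S = alt_gap_sum u {x, b} {z\<in>S. z < b} * alt_gap_sum u {b, y} {z\<in>S. b < z}"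
proof -
  have e: "{a\<in>{x, b, y}. a \<le> b} = {x, b}" "{a\<in>{x, b, y}. b \<le> a} = {b, y}"
    using assms by auto
  have "{x, b, y} \<inter> S = {}" "finite S"
    using assms finite_subset[OF assms(3)] by auto
  from alt_gap_sum_split[OF _ this(2) _ this(1), of b u] show ?thesis
    unfolding e by simp
qed

lemma alt_gap_sum_by_max:
  assumes "finite B"
  shows "alt_gap_sum u A B = gap_prod u A - (\<Sum>b\<in>B. alt_gap_sum u (insert b A) {x\<in>B. x < b})"
  using assms
proof (induction B rule: finite_linorder_max_induct)
  case (insert b C)
  then have "b \<notin> C" by auto
  have "(\<Sum>c\<in>insert b C. alt_gap_sum u (insert c A) {x\<in>insert b C. x < c})
      = alt_gap_sum u (insert b A) C + (\<Sum>c\<in>C. alt_gap_sum u (insert c A) {x\<in>C. x < c})"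
  proof -
    have "{x\<in>insert b C. x < b} = C" "\<And>c. c \<in> C \<Longrightarrow> {x\<in>insert b C. x < c} = {x\<in>C. x < c}"
      using insert.hyps by auto
    then show ?thesis
      using insert.hyps \<open>b \<notin> C\<close> by (simp del: Collect_mem_eq add: sum.insert)
  qed
  with insert.hyps insert.IH \<open>b \<notin> C\<close> show ?case
    by (simp add: alt_gap_sum_insert)
qed simp

lemma alt_gap_sum_by_min:
  assumes "finite B"
  shows "alt_gap_sum u A B = gap_prod u A - (\<Sum>b\<in>B. alt_gap_sum u (insert b A) {x\<in>B. b < x})"
  using assms
proof (induction B rule: finite_linorder_min_induct)
  case (insert b C)
  then have "b \<notin> C" by auto
  have "(\<Sum>c\<in>insert b C. alt_gap_sum u (insert c A) {x\<in>insert b C. c < x})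
      = alt_gap_sum u (insert b A) C + (\<Sum>c\<in>C. alt_gap_sum u (insert c A) {x\<in>C. c < x})"
  proof -
    have "{x\<in>insert b C. b < x} = C" "\<And>c. c \<in> C \<Longrightarrow> {x\<in>insert b C. c < x} = {x\<in>C. c < x}"
      using insert.hyps by auto
    then show ?thesis
      using insert.hyps \<open>b \<notin> C\<close> by (simp del: Collect_mem_eq add: sum.insert)
  qed
  with insert.hyps insert.IH \<open>b \<notin> C\<close> show ?case
    by (simp add: alt_gap_sum_insert)
qed simp

lemma alt_gap_sum_antimono:
  assumes "finite I" "S \<subseteq> I"
    and "\<And>d S'. S' \<subseteq> I \<Longrightarrow> d \<in> I - S' \<Longrightarrow> 0 \<le> alt_gap_sum u (insert d A) S'"
  shows "alt_gap_sum u A I \<le> alt_gap_sum u A S"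
proof -
  have "alt_gap_sum u A I \<le> alt_gap_sum u A (I - D)" if "D \<subseteq> I" for D
  proof -
    have "finite D" using that assms(1) finite_subset by blast
    then show ?thesis using that
    proof (induction D rule: finite_induct)
      case (insert d D)
      define S' where "S' = I - insert d D"
      have "I - D = insert d S'" "d \<notin> S'" "finite S'"
        using insert assms(1) by (auto simp: S'_def)
      moreover have "0 \<le> alt_gap_sum u (insert d A) S'"
        using insert.prems by (intro assms(3)) (auto simp: S'_def)
      ultimately have "alt_gap_sum u A (I - D) \<le> alt_gap_sum u A S'"
        using alt_gap_sum_insert[of S' d u A] by simp
      with insert show ?case by (simp add: S'_def)
    qed simp
  qed
  from this[of "I - S"] show ?thesis
    using assms(2) by (simp add: double_diff)
qed

locale log_convex_sequence =
  fixes u :: "nat \<Rightarrow> real"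
  assumes u_0: "u 0 = 1"
    and u_pos: "0 < u k"
    and u_Suc_less: "u (Suc k) < u k"
    and log_convex: "u (Suc k) ^ 2 \<le> u k * u (Suc (Suc k))"
    and log_convex_strict_0: "u 1 ^ 2 < u 2"
begin

lemma u_antimono: "a \<le> b \<Longrightarrow> u b \<le> u a"
  using lift_Suc_antimono_le[of u] u_Suc_less less_imp_le by blast

lemma mono_ratio: "mono (\<lambda>k. u (Suc k) / u k)"
proof (rule mono_iff_le_Suc[THEN iffD2], intro allI)
  fix k
  show "u (Suc k) / u k \<le> u (Suc (Suc k)) / u (Suc k)"
    using log_convex[of k] u_pos[of k] u_pos[of "Suc k"]
    by (simp add: divide_simps power2_eq_square mult.commute)
qed

lemma ratio_cross_le:
  assumes "j \<le> n"
  shows "u n * u (Suc j) \<le> u (Suc n) * u j"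
proof -
  have "u (Suc j) / u j \<le> u (Suc n) / u n"
    using monoD[OF mono_ratio assms] by simp
  then show ?thesis
    using u_pos[of j] u_pos[of n] by (simp add: divide_simps mult.commute)
qed

lemma ratio_cross_less:
  assumes "0 < n"
  shows "u n * u 1 < u (Suc n)"
proof -
  have "u 1 / u 0 < u 2 / u 1"
    using log_convex_strict_0 u_pos[of 1] by (simp add: u_0 divide_simps power2_eq_square)
  also have "u 2 / u 1 \<le> u (Suc n) / u n"
    using monoD[OF mono_ratio, of 1 n] assms by (simp add: numeral_2_eq_2)
  finally show ?thesis
    using u_pos[of n] by (simp add: u_0 divide_simps mult.commute)
qed

definition first_renewal :: "nat \<Rightarrow> nat \<Rightarrow> real" where
  "first_renewal x y = alt_gap_sum u {x, y} {x<..<y}"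

lemma renewal_equation_left:
  assumes "x < y"
  shows "u (y - x) = (\<Sum>i\<in>{x<..y}. first_renewal x i * u (y - i))"
proof -
  have "alt_gap_sum u (insert b {x, y}) {z\<in>{x<..<y}. z < b} = first_renewal x b * u (y - b)"
    if "b \<in> {x<..<y}" for b
  proof -
    have e: "{z\<in>{x<..<b}. z < b} = {x<..<b}" "{z\<in>{x<..<b}. b < z} = {}"
      by auto
    have "x < b" "b < y" "{x<..<b} \<subseteq> {x<..<y}" "b \<notin> {x<..<b}"
      using that by auto
    from alt_gap_sum_triple[OF this, of u]
    have "alt_gap_sum u {x, b, y} {x<..<b} = first_renewal x b * u (y - b)"
      unfolding e using \<open>b < y\<close> by (simp add: first_renewal_def gap_prod_pair)
    moreover have "insert b {x, y} = {x, b, y}" "{z\<in>{x<..<y}. z < b} = {x<..<b}"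
      using that by auto
    ultimately show ?thesis by simp
  qed
  then have "first_renewal x y = u (y - x) - (\<Sum>i\<in>{x<..<y}. first_renewal x i * u (y - i))"
    using alt_gap_sum_by_max[of "{x<..<y}" u "{x, y}"] assms
    by (simp add: first_renewal_def gap_prod_pair)
  moreover have "{x<..y} = insert y {x<..<y}" using assms by auto
  ultimately show ?thesis by (simp add: u_0)
qed

lemma renewal_equation_right:
  assumes "x < y"
  shows "u (y - x) = (\<Sum>i\<in>{x..<y}. u (i - x) * first_renewal i y)"
proof -
  have "alt_gap_sum u (insert b {x, y}) {z\<in>{x<..<y}. b < z} = u (b - x) * first_renewal b y"
    if "b \<in> {x<..<y}" for b
  proof -
    have e: "{z\<in>{b<..<y}. z < b} = {}" "{z\<in>{b<..<y}. b < z} = {b<..<y}"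
      by auto
    have "x < b" "b < y" "{b<..<y} \<subseteq> {x<..<y}" "b \<notin> {b<..<y}"
      using that by auto
    from alt_gap_sum_triple[OF this, of u]
    have "alt_gap_sum u {x, b, y} {b<..<y} = u (b - x) * first_renewal b y"
      unfolding e using \<open>x < b\<close> by (simp add: first_renewal_def gap_prod_pair)
    moreover have "insert b {x, y} = {x, b, y}" "{z\<in>{x<..<y}. b < z} = {b<..<y}"
      using that by auto
    ultimately show ?thesis by simp
  qed
  then have "first_renewal x y = u (y - x) - (\<Sum>i\<in>{x<..<y}. u (i - x) * first_renewal i y)"
    using alt_gap_sum_by_min[of "{x<..<y}" u "{x, y}"] assms
    by (simp add: first_renewal_def gap_prod_pair)
  moreover have "{x..<y} = insert x {x<..<y}" using assms by auto
  ultimately show ?thesis by (simp add: u_0)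
qed

lemma renewal_equation:
  assumes "0 < n"
  shows "u n = (\<Sum>k=1..n. first_renewal x (x + k) * u (n - k))"
proof -
  have "u n = (\<Sum>i\<in>{x<..x + n}. first_renewal x i * u (x + n - i))"
    using renewal_equation_left[of x "x + n"] assms by simp
  also have "\<dots> = (\<Sum>k=1..n. first_renewal x (x + k) * u (n - k))"
    by (rule sum.reindex_bij_witness[of _ "\<lambda>k. x + k" "\<lambda>i. i - x"]) (auto simp: add.commute)
  finally show ?thesis .
qed

text \<open>Kaluza's argument: with \<open>f k = first_renewal x (x + k)\<close>, comparing the renewal equations
  for \<open>m\<close> and \<open>m + 1\<close> expresses \<open>u m * f (m + 1)\<close> as a combination of the earlier \<open>f k\<close> with coefficients
  \<open>u (m + 1) * u (m - k) - u m * u (m + 1 - k)\<close>, which are nonnegative by log-convexity.\<close>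
lemma first_renewal_pos:
  assumes "x < y"
  shows "0 < first_renewal x y"
proof -
  have "0 < first_renewal x (x + n)" if "0 < n" for n
    using that
  proof (induction n rule: less_induct)
    case (less n)
    show ?case
    proof (cases "n = 1")
      case True
      then show ?thesis using renewal_equation[of 1 x] u_pos[of 1] by (simp add: u_0)
    next
      case False
      then obtain m where m: "n = Suc m" "0 < m" using less.prems by (cases n) auto
      let ?f = "\<lambda>k. first_renewal x (x + k)"
      have "u m * ?f (Suc m) = u m * u (Suc m) - u m * (\<Sum>k=1..m. ?f k * u (Suc m - k))"
        using renewal_equation[of "Suc m" x] by (simp add: u_0 algebra_simps)
      also have "\<dots> = (\<Sum>k=1..m. ?f k * (u (Suc m) * u (m - k) - u m * u (Suc m - k)))"
        by (subst (1) renewal_equation[OF m(2), of x])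
          (simp add: sum_distrib_left sum_distrib_right sum_subtractf algebra_simps)
      also have "\<dots> > 0"
      proof (rule sum_pos2[where i = m])
        show "0 < ?f m * (u (Suc m) * u (m - m) - u m * u (Suc m - m))"
          using less.IH[of m] m ratio_cross_less[of m] by (simp add: u_0)
        show "0 \<le> ?f k * (u (Suc m) * u (m - k) - u m * u (Suc m - k))" if "k \<in> {1..m}" for k
        proof -
          have "Suc m - k = Suc (m - k)" using that by auto
          then show ?thesis
            using less.IH[of k] that m ratio_cross_le[of "m - k" m] by simp
        qed
      qed (use m in auto)
      finally show ?thesis
        using u_pos[of m] m by (simp add: zero_less_mult_iff)
    qed
  qed
  from this[of "y - x"] show ?thesis using assms by simp
qed

lemma first_renewal_sum_left_less_1:
  assumes "x < y"
  shows "(\<Sum>i\<in>{x<..y}. first_renewal x i) < 1"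
proof -
  have "(\<Sum>i\<in>{x<..y}. first_renewal x i) * u (y - x - 1) = (\<Sum>i\<in>{x<..y}. first_renewal x i * u (y - x - 1))"
    by (simp add: sum_distrib_right)
  also have "\<dots> \<le> (\<Sum>i\<in>{x<..y}. first_renewal x i * u (y - i))"
    by (intro sum_mono mult_left_mono u_antimono) (auto intro: less_imp_le first_renewal_pos)
  also have "\<dots> = u (y - x)" using renewal_equation_left[OF assms] by simp
  also have "\<dots> < u (y - x - 1)" using u_Suc_less[of "y - x - 1"] assms by (simp add: Suc_diff_Suc)
  finally show ?thesis using u_pos[of "y - x - 1"] by simp
qed

lemma first_renewal_sum_right_less_1:
  assumes "x < y"
  shows "(\<Sum>i\<in>{x..<y}. first_renewal i y) < 1"
proof -
  have "(\<Sum>i\<in>{x..<y}. first_renewal i y) * u (y - x - 1) = (\<Sum>i\<in>{x..<y}. u (y - x - 1) * first_renewal i y)"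
    by (simp add: sum_distrib_left mult.commute)
  also have "\<dots> \<le> (\<Sum>i\<in>{x..<y}. u (i - x) * first_renewal i y)"
    by (intro sum_mono mult_right_mono u_antimono) (auto intro: less_imp_le first_renewal_pos)
  also have "\<dots> = u (y - x)" using renewal_equation_right[OF assms] by simp
  also have "\<dots> < u (y - x - 1)" using u_Suc_less[of "y - x - 1"] assms by (simp add: Suc_diff_Suc)
  finally show ?thesis using u_pos[of "y - x - 1"] by simp
qed

lemma alt_gap_sum_pair_pos:
  assumes "x < y" "S \<subseteq> {x<..<y}"
  shows "0 < alt_gap_sum u {x, y} S"
  using assms
proof (induction "y - x" arbitrary: x y S rule: less_induct)
  case less
  have "first_renewal x y \<le> alt_gap_sum u {x, y} S"
    unfolding first_renewal_def
  proof (rule alt_gap_sum_antimono)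
    fix d S' assume S': "S' \<subseteq> {x<..<y}" "d \<in> {x<..<y} - S'"
    then have "x < d" "d < y" by auto
    have "0 < alt_gap_sum u {x, d} {z\<in>S'. z < d}" "0 < alt_gap_sum u {d, y} {z\<in>S'. d < z}"
      using S' \<open>x < d\<close> \<open>d < y\<close> by (auto intro!: less.hyps)
    moreover have "insert d {x, y} = {x, d, y}" by auto
    ultimately show "0 \<le> alt_gap_sum u (insert d {x, y}) S'"
      using alt_gap_sum_triple[of x d y S' u] S' by simp
  qed (use less.prems in auto)
  then show ?case
    using first_renewal_pos[OF less.prems(1)] by linarith
qed

lemma alt_gap_sum_singleton_right_pos:
  assumes "S \<subseteq> {x<..M}"
  shows "0 < alt_gap_sum u {x} S"
  using assms
proof (induction "M - x" arbitrary: x S rule: less_induct)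
  case less
  have full: "alt_gap_sum u {x} {x<..M} = 1 - (\<Sum>i\<in>{x<..M}. first_renewal x i)"
  proof -
    have "alt_gap_sum u (insert b {x}) {z\<in>{x<..M}. z < b} = first_renewal x b" if "b \<in> {x<..M}" for b
    proof -
      have "insert b {x} = {x, b}" "{z\<in>{x<..M}. z < b} = {x<..<b}" using that by auto
      then show ?thesis by (simp add: first_renewal_def)
    qed
    then show ?thesis by (simp add: alt_gap_sum_by_max[of "{x<..M}" u "{x}"])
  qed
  have "0 < 1 - (\<Sum>i\<in>{x<..M}. first_renewal x i)"
    using first_renewal_sum_left_less_1[of x M] by (cases "x < M") auto
  also have "1 - (\<Sum>i\<in>{x<..M}. first_renewal x i) \<le> alt_gap_sum u {x} S"
    unfolding full[symmetric]
  proof (rule alt_gap_sum_antimono)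
    fix d S' assume S': "S' \<subseteq> {x<..M}" "d \<in> {x<..M} - S'"
    then have "x < d" by auto
    have "0 < alt_gap_sum u {x, d} {z\<in>S'. z < d}"
      using S' \<open>x < d\<close> by (intro alt_gap_sum_pair_pos) auto
    moreover have "0 < alt_gap_sum u {d} {z\<in>S'. d < z}"
      using S' \<open>x < d\<close> by (intro less.hyps) auto
    moreover have "insert d {x} = {x, d}" "Max {x, d} = d" "{x, d} \<inter> S' = {}"
      using S' \<open>x < d\<close> by auto
    ultimately show "0 \<le> alt_gap_sum u (insert d {x}) S'"
      using alt_gap_sum_split_Max[of "{x, d}" S' u] finite_subset[OF S'(1)] by simp
  qed (use less.prems in auto)
  finally show ?case .
qed

lemma alt_gap_sum_singleton_left_pos:
  assumes "S \<subseteq> {m..<y}"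
  shows "0 < alt_gap_sum u {y} S"
  using assms
proof (induction "y - m" arbitrary: y S rule: less_induct)
  case less
  have full: "alt_gap_sum u {y} {m..<y} = 1 - (\<Sum>i\<in>{m..<y}. first_renewal i y)"
  proof -
    have "alt_gap_sum u (insert b {y}) {z\<in>{m..<y}. b < z} = first_renewal b y" if "b \<in> {m..<y}" for b
    proof -
      have "insert b {y} = {b, y}" "{z\<in>{m..<y}. b < z} = {b<..<y}" using that by auto
      then show ?thesis by (simp add: first_renewal_def)
    qed
    then show ?thesis by (simp add: alt_gap_sum_by_min[of "{m..<y}" u "{y}"])
  qed
  have "0 < 1 - (\<Sum>i\<in>{m..<y}. first_renewal i y)"
    using first_renewal_sum_right_less_1[of m y] by (cases "m < y") auto
  also have "1 - (\<Sum>i\<in>{m..<y}. first_renewal i y) \<le> alt_gap_sum u {y} S"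
    unfolding full[symmetric]
  proof (rule alt_gap_sum_antimono)
    fix d S' assume S': "S' \<subseteq> {m..<y}" "d \<in> {m..<y} - S'"
    then have "d < y" by auto
    have "0 < alt_gap_sum u {d, y} {z\<in>S'. d < z}"
      using S' \<open>d < y\<close> by (intro alt_gap_sum_pair_pos) auto
    moreover have "0 < alt_gap_sum u {d} {z\<in>S'. z < d}"
      using S' \<open>d < y\<close> by (intro less.hyps) auto
    moreover have "insert d {y} = {d, y}" "Min {d, y} = d" "{d, y} \<inter> S' = {}"
      using S' \<open>d < y\<close> by auto
    ultimately show "0 \<le> alt_gap_sum u (insert d {y}) S'"
      using alt_gap_sum_split_Min[of "{d, y}" S' u] finite_subset[OF S'(1)] by simp
  qed (use less.prems in auto)
  finally show ?case .
qed

lemma alt_gap_sum_singleton_pos: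
  assumes "finite S" "a \<notin> S"
  shows "0 < alt_gap_sum u {a} S"
proof -
  have "0 < alt_gap_sum u {a} {b\<in>S. b < a}"
    by (rule alt_gap_sum_singleton_left_pos[of _ 0]) auto
  moreover have "0 < alt_gap_sum u {a} {b\<in>S. a < b}"
    by (rule alt_gap_sum_singleton_right_pos[of _ _ "Max S"]) (auto simp: assms(1))
  ultimately show ?thesis
    using alt_gap_sum_split_Max[of "{a}" S u] assms by simp
qed

lemma alt_gap_sum_pos:
  assumes "finite A" "A \<noteq> {}" "finite B" "A \<inter> B = {}"
  shows "0 < alt_gap_sum u A B"
  using assms
proof (induction A arbitrary: B rule: finite_linorder_max_induct)
  case (insert a A)
  show ?case
  proof (cases "A = {}")
    case True
    with insert.prems show ?thesis by (simp add: alt_gap_sum_singleton_pos)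
  next
    case False
    define a' where "a' = Max A"
    have "a' \<in> A" "a' < a" "\<forall>x\<in>A. x \<le> a'"
      using False insert.hyps by (auto simp: a'_def)
    then have e: "{x\<in>insert a A. x \<le> a'} = A" "{x\<in>insert a A. a' \<le> x} = {a', a}"
      by (auto intro: antisym)
    let ?B = "{b\<in>B. a' < b}"
    have "0 < alt_gap_sum u {a', a} {b\<in>?B. b < a}"
      using \<open>a' < a\<close> by (intro alt_gap_sum_pair_pos) auto
    moreover have "0 < alt_gap_sum u {a} {b\<in>?B. a < b}"
      using insert.prems by (intro alt_gap_sum_singleton_pos) auto
    moreover have "Max {a', a} = a" "{a', a} \<inter> ?B = {}"
      using \<open>a' < a\<close> insert.prems by auto
    ultimately have "0 < alt_gap_sum u {a', a} ?B"
      using alt_gap_sum_split_Max[of "{a', a}" ?B u] insert.prems by simp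
    moreover have "0 < alt_gap_sum u A {b\<in>B. b < a'}"
      using False insert.prems by (intro insert.IH) auto
    ultimately show ?thesis
      using alt_gap_sum_split[of "insert a A" B a' u] insert.prems insert.hyps \<open>a' \<in> A\<close>
      unfolding e by simp
  qed
qed simp

lemma alt_gap_sum_empty_bound:
  assumes "finite B" "0 \<notin> B" "\<And>b. b \<in> B \<Longrightarrow> K \<le> u b"
  shows "K * (1 - alt_gap_sum u {} B) < 1"
proof -
  let ?R = "\<lambda>b. alt_gap_sum u {b} {x\<in>B. b < x}"
  have R_pos: "0 < ?R b" for b
    using assms(1) by (intro alt_gap_sum_singleton_pos) auto
  have "alt_gap_sum u {0, b} {x\<in>B. b < x} = u b * ?R b" if "b \<in> B" for b
  proof -
    have "0 < b" "Max {0, b} = b" "{x\<in>{x\<in>B. b < x}. x < b} = {}" "{x\<in>{x\<in>B. b < x}. b < x} = {x\<in>B. b < x}"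
      using that assms(2) by (auto intro: gr0I)
    then show ?thesis
      using alt_gap_sum_split_Max[of "{0, b}" "{x\<in>B. b < x}" u] assms(1)
      by (simp only:) (simp add: gap_prod_pair)
  qed
  then have "1 - alt_gap_sum u {0} B = (\<Sum>b\<in>B. u b * ?R b)"
    using alt_gap_sum_by_min[OF assms(1), of u "{0}"] by (simp add: insert_commute)
  moreover have "1 - alt_gap_sum u {} B = (\<Sum>b\<in>B. ?R b)"
    using alt_gap_sum_by_min[OF assms(1), of u "{}"] by simp
  moreover have "(\<Sum>b\<in>B. K * ?R b) \<le> (\<Sum>b\<in>B. u b * ?R b)"
    using assms(3) R_pos by (intro sum_mono mult_right_mono) (auto intro: less_imp_le)
  moreover have "0 < alt_gap_sum u {0} B"
    using assms by (intro alt_gap_sum_singleton_pos) auto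
  ultimately show ?thesis
    by (simp add: sum_distrib_left)
qed

end

definition power_seq :: "real \<Rightarrow> real \<Rightarrow> nat \<Rightarrow> real" where
  "power_seq c \<alpha> k = (if k = 0 then 1 else c * real k powr \<alpha>)"

lemma log_convex_sequence_power_seq:
  assumes "\<alpha> < 0" "0 < c" "c < 2 powr \<alpha>"
  shows "log_convex_sequence (power_seq c \<alpha>)"
proof
  have "2 powr \<alpha> < 1"
    using assms(1) powr_less_mono[of \<alpha> 0 2] by simp
  then have "c < 1" using assms(3) by linarith
  fix k
  show "0 < power_seq c \<alpha> k"
    using assms(2) by (simp add: power_seq_def)
  show "power_seq c \<alpha> (Suc k) < power_seq c \<alpha> k"
  proof (cases "k = 0")
    case False
    then have "real (Suc k) powr \<alpha> < real k powr \<alpha>"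
      using assms(1) by (intro powr_less_mono2_neg) auto
    with False assms(2) show ?thesis by (simp add: power_seq_def)
  qed (use \<open>c < 1\<close> in \<open>simp add: power_seq_def\<close>)
  show "power_seq c \<alpha> (Suc k) ^ 2 \<le> power_seq c \<alpha> k * power_seq c \<alpha> (Suc (Suc k))"
  proof (cases "k = 0")
    case True
    then show ?thesis
      using assms(2,3) by (simp add: power_seq_def power2_eq_square numeral_2_eq_2 less_imp_le)
  next
    case False
    have "real k * real (Suc (Suc k)) \<le> real (Suc k) * real (Suc k)"
      by (simp add: algebra_simps)
    then have "(real (Suc k) * real (Suc k)) powr \<alpha> \<le> (real k * real (Suc (Suc k))) powr \<alpha>"
      using False assms(1) by (intro powr_mono2') auto
    then have "c * c * (real (Suc k) powr \<alpha> * real (Suc k) powr \<alpha>)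
        \<le> c * c * (real k powr \<alpha> * real (Suc (Suc k)) powr \<alpha>)"
      using assms(2) by (intro mult_left_mono) (auto simp: powr_mult)
    with False show ?thesis
      by (simp add: power_seq_def power2_eq_square algebra_simps)
  qed
qed (use assms in \<open>simp_all add: power_seq_def power2_eq_square numeral_2_eq_2\<close>)

lemma Lc_eq_gap_prod:
  assumes "X \<noteq> {}"
  shows "Lc H c lam n X = gap_prod (\<lambda>k. real k powr (2*H - 2)) X"
proof -
  define xs where "xs = sorted_list_of_set X"
  have le: "xs ! i \<le> xs ! Suc i" if "Suc i < length xs" for i
    using sorted_nth_mono[OF sorted_sorted_list_of_set[of X], of i "Suc i"] that by (simp add: xs_def)
  have "{1..<length xs} = {Suc 0..<Suc (length xs - 1)}" by auto
  then have "Lc H c lam n X = (\<Prod>i\<in>{0..<length xs - 1}. \<bar>real (xs ! Suc i) - real (xs ! i)\<bar> powr (2*H - 2))"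
    using assms unfolding Lc_def xs_def[symmetric] Let_def
    by (simp only: prod.atLeast_Suc_lessThan_Suc_shift if_False o_def diff_Suc_1)
  also have "\<dots> = gap_prod (\<lambda>k. real k powr (2*H - 2)) X"
    unfolding gap_prod_def xs_def[symmetric] Let_def lessThan_atLeast0
    by (intro prod.cong) (auto simp: le of_nat_diff)
  finally show ?thesis .
qed

lemma power_Lc_eq_gap_prod:
  assumes "finite X"
  shows "c ^ card X * Lc H c lam n X
    = c * gap_prod (power_seq c (2*H - 2)) X + (if X = {} then c / pn H lam n - c else 0)"
proof (cases "X = {}")
  case False
  then have "card X = Suc (card X - 1)"
    using assms by (simp add: card_gt_0_iff)
  then have "c ^ card X = c * c ^ (card X - 1)"
    by (metis power_Suc)
  then have "c ^ card X * Lc H c lam n X = c * (c ^ (card X - 1) * gap_prod (\<lambda>k. real k powr (2*H - 2)) X)"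
    using Lc_eq_gap_prod[OF False] by simp
  also have "\<dots> = c * gap_prod (power_seq c (2*H - 2)) X"
    using gap_prod_cong[of "power_seq c (2*H - 2)" "\<lambda>k. c * real k powr (2*H - 2)" X]
    by (simp add: gap_prod_scale power_seq_def)
  finally show ?thesis using False by simp
qed (simp add: Lc_def)

lemma power_Dc_eq_alt_gap_sum:
  assumes "finite A" "finite B" "A \<inter> B = {}"
  shows "c ^ card A * Dc H c lam n A B
    = c * alt_gap_sum (power_seq c (2*H - 2)) A B + (if A = {} then c / pn H lam n - c else 0)"
proof -
  let ?g = "gap_prod (power_seq c (2*H - 2))" and ?K = "c / pn H lam n - c"
  have termwise: "c ^ card A * ((-1) ^ card B' * c ^ card B' * Lc H c lam n (A \<union> B'))
      = c * ((-1) ^ card B' * ?g (A \<union> B')) + (if A \<union> B' = {} then ?K else 0)"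
    if "B' \<in> Pow B" for B'
  proof -
    have "finite B'" "A \<inter> B' = {}" using that assms finite_subset by auto
    then have "c ^ card A * c ^ card B' = c ^ card (A \<union> B')"
      using assms(1) by (simp add: card_Un_disjoint power_add)
    then have "c ^ card A * ((-1) ^ card B' * c ^ card B' * Lc H c lam n (A \<union> B'))
        = (-1) ^ card B' * (c ^ card (A \<union> B') * Lc H c lam n (A \<union> B'))"
      by (metis mult.assoc mult.left_commute)
    also have "\<dots> = (-1) ^ card B' * (c * ?g (A \<union> B') + (if A \<union> B' = {} then ?K else 0))"
      using power_Lc_eq_gap_prod[of "A \<union> B'" c H lam n] \<open>finite B'\<close> assms(1) by simp
    also have "\<dots> = c * ((-1) ^ card B' * ?g (A \<union> B')) + (if A \<union> B' = {} then ?K else 0)"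
      by (cases "A \<union> B' = {}") auto
    finally show ?thesis .
  qed
  have "(\<Sum>B'\<in>Pow B. if A \<union> B' = {} then ?K else 0) = (if A = {} then ?K else 0)"
    by (cases "A = {}") (simp_all add: assms(2) sum.delta)
  with termwise show ?thesis
    unfolding Dc_def alt_gap_sum_def by (simp add: sum_distrib_left sum.distrib)
qed

theorem lemma2p3:
  fixes H c lam :: real and n :: nat and A B :: "nat set"
  assumes "1/2 < H" "H < 1"
    and "0 < c" "c < 2 powr (2*H - 2)"
    and "0 < lam" "lam < c"
    and "1 \<le> n"
    and "A \<subseteq> {1..n}" "B \<subseteq> {1..n}" "A \<inter> B = {}"
  shows "pn H lam n * c powr (real (card A) - 1) * Dc H c lam n A B > 0"
proof -
  let ?u = "power_seq c (2*H - 2)"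
  interpret log_convex_sequence ?u
    using assms by (intro log_convex_sequence_power_seq) auto
  have fin: "finite A" "finite B"
    using assms(8,9) finite_subset by auto
  have pn_pos: "0 < pn H lam n"
    using assms(5,7) by (simp add: pn_def)
  have "pn H lam n * c powr (real (card A) - 1) * Dc H c lam n A B
      = pn H lam n / c * (c ^ card A * Dc H c lam n A B)"
    using assms(3) by (simp add: powr_diff powr_realpow)
  also have "\<dots> = pn H lam n * alt_gap_sum ?u A B + (if A = {} then 1 - pn H lam n else 0)"
    using power_Dc_eq_alt_gap_sum[OF fin assms(10), of c H lam n] assms(3) pn_pos
    by (simp add: field_simps)
  finally have target: "pn H lam n * c powr (real (card A) - 1) * Dc H c lam n A B
      = pn H lam n * alt_gap_sum ?u A B + (if A = {} then 1 - pn H lam n else 0)" .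
  show ?thesis
  proof (cases "A = {}")
    case True
    have "pn H lam n \<le> ?u b" if "b \<in> B" for b
    proof -
      have "real n powr (2*H - 2) \<le> real b powr (2*H - 2)"
        using that assms(2,9) by (intro powr_mono2') auto
      then show ?thesis
        using that assms(5,6,9) by (auto simp: pn_def power_seq_def intro!: mult_mono)
    qed
    then have "pn H lam n * (1 - alt_gap_sum ?u {} B) < 1"
      using assms(9) by (intro alt_gap_sum_empty_bound fin) auto
    then show ?thesis
      using target True by (simp add: algebra_simps)
  next
    case False
    have "0 < pn H lam n * alt_gap_sum ?u A B"
      using alt_gap_sum_pos[OF fin(1) False fin(2) assms(10)] pn_pos by simp
    with False show ?thesis
      unfolding target by simp
  qed
qed

end
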